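(* Let $f\in\bar U_{NP}$ with partition spacing constant $\Xi$, let $\iota\in I$ and $\sigma\in\{-1,1\}$ be such that $v_\iota(\sigma)\notin\{-1,1\}$. Let $\tau_{\iota,\sigma}=\sigma\,\mathrm{sgn}\,v_\iota'(0)$ and $T_{\iota,\sigma}(x)=1-v_\iota(x)/\tau_{\iota,\sigma}$. Then $T_{\iota,\sigma}(x)\ge\Xi^{-1}|\mathcal{O}_\iota|$ for all $x\in[-1,1]$. If moreover $f$ satisfies the analytic distortion condition $(\mathrm{AD}_\delta)$, then there exist $\zeta\in(0,\delta]$ and $\mathfrak{K}_\zeta>0$ such that $|T_{\iota,\sigma}(z)|\ge\mathfrak{K}_\zeta|\mathcal{O}_\iota|$ for all $z\in\check\Lambda_\zeta$.
   Context: Class $\bar U_{NP}$: full-branch Markov maps $f$ of $[-1,1]$: disjoint open intervals $\mathcal{O}_\iota$, $\iota\in I$ ($I$ countable), covering $[-1,1]$ up to a countable set, with $f|_{\mathcal{O}_\iota}$ extending to a $C^2$ bijection $\hat f_\iota:\overline{\mathcal{O}_\iota}\to[-1,1]$ and $v_\iota=\hat f_\iota^{-1}$; required: $\sup_{\iota,x}|v_\iota''/v_\iota'|<\infty$, $\inf_{x\in\cup\mathcal{O}_\iota}\frac{\sqrt{1-x^2}}{\sqrt{1-f(x)^2}}|f'(x)|>0$, and partition spacing constant $\Xi:=\sup\{|\mathcal{O}_\iota|/d(\mathcal{O}_\iota,\sigma):\iota\in I,\sigma\in\{\pm1\},\sigma\notin\overline{\mathcal{O}_\iota}\}<\infty$.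 $\check\Lambda_\zeta$ denotes the closed region bounded by the Bernstein ellipse of parameter $e^\zeta$ (centre $0$, semi-axes $\cosh\zeta$ along $\mathbb{R}$ and $\sinh\zeta$ along $i\mathbb{R}$). $(\mathrm{AD}_\delta)$: each $v_\iota$ is holomorphic on $\check\Lambda_\delta$ and $\sup_{\iota,z\in\check\Lambda_\delta}|v_\iota''(z)/v_\iota'(z)|<\infty$. *)

theory Defs
  imports "HOL-Analysis.Analysis" "HOL-Complex_Analysis.Complex_Analysis"
begin

definition ilen :: "real set \<Rightarrow> real" where
  "ilen S = Sup S - Inf S"

text \<open>Closed region bounded by the Bernstein ellipse of parameter exp zeta
  (semi-axes cosh zeta along the real axis, sinh zeta along the imaginary axis).\<close>
definition bernstein_region :: "real \<Rightarrow> complex set" where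
  "bernstein_region \<zeta> =
     {z. (Re z)\<^sup>2 / (cosh \<zeta>)\<^sup>2 + (Im z)\<^sup>2 / (sinh \<zeta>)\<^sup>2 \<le> 1}"

definition spacing_ratios :: "'i set \<Rightarrow> ('i \<Rightarrow> real set) \<Rightarrow> real set" where
  "spacing_ratios I Os =
     {ilen (Os \<iota>) / infdist \<sigma> (Os \<iota>) | \<iota> \<sigma>.
        \<iota> \<in> I \<and> \<sigma> \<in> {-1, 1} \<and> \<sigma> \<notin> closure (Os \<iota>)}"

definition spacing_const :: "'i set \<Rightarrow> ('i \<Rightarrow> real set) \<Rightarrow> real" where
  "spacing_const I Os = Sup (spacing_ratios I Os)"

text \<open>Class bar U_NP.  f is the map, I the countable index set, Os the partition
  intervals, v the inverse branches (v \<iota> = inverse of the extension of f on the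
  closure of Os \<iota>), with first and second derivatives dv, ddv on [-1,1].\<close>
definition in_UNP ::
  "(real \<Rightarrow> real) \<Rightarrow> 'i set \<Rightarrow> ('i \<Rightarrow> real set) \<Rightarrow>
   ('i \<Rightarrow> real \<Rightarrow> real) \<Rightarrow> ('i \<Rightarrow> real \<Rightarrow> real) \<Rightarrow> ('i \<Rightarrow> real \<Rightarrow> real) \<Rightarrow> bool" where
  "in_UNP f I Os v dv ddv \<longleftrightarrow>
     countable I \<and>
     (\<forall>\<iota>\<in>I. \<exists>a b. -1 \<le> a \<and> a < b \<and> b \<le> 1 \<and> Os \<iota> = {a<..<b}) \<and>
     (\<forall>\<iota>\<in>I. \<forall>\<kappa>\<in>I. \<iota> \<noteq> \<kappa> \<longrightarrow> Os \<iota> \<inter> Os \<kappa> = {}) \<and>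
     countable ({-1..1} - (\<Union>\<iota>\<in>I. Os \<iota>)) \<and>
     (\<forall>\<iota>\<in>I. bij_betw (v \<iota>) {-1..1} (closure (Os \<iota>)) \<and>
        (\<forall>x\<in>Os \<iota>. f x \<in> {-1..1} \<and> v \<iota> (f x) = x) \<and>
        (\<forall>x\<in>{-1..1}. (v \<iota> has_real_derivative dv \<iota> x) (at x within {-1..1}) \<and>
                      (dv \<iota> has_real_derivative ddv \<iota> x) (at x within {-1..1})) \<and>
        continuous_on {-1..1} (ddv \<iota>)) \<and>
     (\<exists>C. \<forall>\<iota>\<in>I. \<forall>x\<in>{-1..1}. dv \<iota> x \<noteq> 0 \<and> \<bar>ddv \<iota> x / dv \<iota> x\<bar> \<le> C) \<and>
     (\<exists>c>0. \<forall>\<iota>\<in>I. \<forall>x\<in>Os \<iota>.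
        c \<le> sqrt (1 - x\<^sup>2) / sqrt (1 - (f x)\<^sup>2) * \<bar>deriv f x\<bar>) \<and>
     bdd_above (spacing_ratios I Os)"

text \<open>Analytic distortion condition (AD_delta): V \<iota> is the holomorphic extension
  of v \<iota> to (a neighbourhood of) the closed Bernstein region.\<close>
definition AD ::
  "real \<Rightarrow> 'i set \<Rightarrow> ('i \<Rightarrow> real \<Rightarrow> real) \<Rightarrow> ('i \<Rightarrow> complex \<Rightarrow> complex) \<Rightarrow> bool" where
  "AD \<delta> I v V \<longleftrightarrow>
     0 < \<delta> \<and>
     (\<forall>\<iota>\<in>I. V \<iota> analytic_on bernstein_region \<delta> \<and>
        (\<forall>x\<in>{-1..1}. V \<iota> (complex_of_real x) = complex_of_real (v \<iota> x))) \<and>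
     (\<exists>C. \<forall>\<iota>\<in>I. \<forall>z\<in>bernstein_region \<delta>.
        deriv (V \<iota>) z \<noteq> 0 \<and> cmod (deriv (deriv (V \<iota>)) z / deriv (V \<iota>) z) \<le> C)"

end

theory Submission
  imports Defs
begin

(* Each inverse branch v is strictly monotone, so for tau = sigma sgn v'(0) the function tau v
   is maximal at sigma; as v(sigma) is not an endpoint of [-1,1], tau lies outside the closure
   of O.  Hence 1 - v(x)/tau >= 1 - tau v(sigma) = d(tau, v(sigma)) >= d(tau, O) >= |O|/Xi.
   In the analytic case, the bound on V''/V' makes log V' Lipschitz on a convex open ellipse,
   so |V'| is uniformly comparable to its value at a real point where, by the mean value
   theorem, |v'| = |O|/2.  Every point of a thin Bernstein ellipse lies within e^zeta - 1 of
   [-1,1], so V moves there by at most half of the real lower bound. *)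

lemma continuous_nonvanishing_sgn_eq:
  fixes g :: "'a::topological_space \<Rightarrow> real"
  assumes "connected S" "continuous_on S g" "\<forall>x\<in>S. g x \<noteq> 0" "x \<in> S" "y \<in> S"
  shows "sgn (g x) = sgn (g y)"
proof (rule ccontr)
  assume "sgn (g x) \<noteq> sgn (g y)"
  moreover have "g x \<noteq> 0" "g y \<noteq> 0" using assms(3-5) by blast+
  ultimately have opposite: "g x < 0 \<and> 0 < g y \<or> g y < 0 \<and> 0 < g x"
    by (auto simp: sgn_real_def split: if_splits)
  have "connected (g ` S)" "g x \<in> g ` S" "g y \<in> g ` S"
    using connected_continuous_image[OF assms(2,1)] assms(4,5) by auto
  then have "0 \<in> g ` S"
    using opposite connectedD_interval[of "g ` S" "g x" "g y" 0]
      connectedD_interval[of "g ` S" "g y" "g x" 0] by force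
  then show False using assms(3) by auto
qed

lemma has_real_derivative_nonneg_imp_mono:
  fixes f :: "real \<Rightarrow> real"
  assumes der: "\<And>t. t \<in> {a..b} \<Longrightarrow> (f has_real_derivative f' t) (at t within {a..b})"
    and nonneg: "\<And>t. t \<in> {a..b} \<Longrightarrow> 0 \<le> f' t"
    and "a \<le> x" "x \<le> y" "y \<le> b"
  shows "f x \<le> f y"
proof -
  have "\<exists>t\<in>{x..y}. f y - f x = f' t * (y - x)"
  proof (rule mvt_very_simple[OF \<open>x \<le> y\<close>])
    fix t assume "x \<le> t" "t \<le> y"
    then have "(f has_real_derivative f' t) (at t within {x..y})"
      using assms by (intro DERIV_subset[OF der]) auto
    then show "(f has_derivative (*) (f' t)) (at t within {x..y})"
      by (simp add: has_field_derivative_def)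
  qed
  then obtain t where "t \<in> {x..y}" "f y - f x = f' t * (y - x)" by blast
  moreover have "0 \<le> f' t * (y - x)"
    using nonneg[of t] \<open>t \<in> {x..y}\<close> assms(3-5) by simp
  ultimately show ?thesis by linarith
qed

lemma in_UNP_branches:
  assumes "in_UNP f I Os v dv ddv"
  shows "\<forall>\<iota>\<in>I. bij_betw (v \<iota>) {-1..1} (closure (Os \<iota>)) \<and>
        (\<forall>x\<in>Os \<iota>. f x \<in> {-1..1} \<and> v \<iota> (f x) = x) \<and>
        (\<forall>x\<in>{-1..1}. (v \<iota> has_real_derivative dv \<iota> x) (at x within {-1..1}) \<and>
                      (dv \<iota> has_real_derivative ddv \<iota> x) (at x within {-1..1})) \<and>
        continuous_on {-1..1} (ddv \<iota>)"
  using assms unfolding in_UNP_def by (elim conjE) assumption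

lemma in_UNP_intervalE:
  assumes "in_UNP f I Os v dv ddv" "\<iota> \<in> I"
  obtains a b where "-1 \<le> a" "a < b" "b \<le> 1" "Os \<iota> = {a<..<b}" "v \<iota> ` {-1..1} = {a..b}"
proof -
  have "\<forall>\<iota>\<in>I. \<exists>a b. -1 \<le> a \<and> a < b \<and> b \<le> 1 \<and> Os \<iota> = {a<..<b}"
    using assms(1) unfolding in_UNP_def by (elim conjE) assumption
  then obtain a b where ab: "-1 \<le> a" "a < b" "b \<le> 1" "Os \<iota> = {a<..<b}"
    using assms(2) by blast
  moreover have "v \<iota> ` {-1..1} = closure (Os \<iota>)"
    using in_UNP_branches[OF assms(1)] assms(2) unfolding bij_betw_def by blast
  ultimately show thesis
    using that by simp
qed

lemma in_UNP_derivD: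
  assumes "in_UNP f I Os v dv ddv" "\<iota> \<in> I"
  shows "x \<in> {-1..1} \<Longrightarrow> (v \<iota> has_real_derivative dv \<iota> x) (at x within {-1..1})"
    and "continuous_on {-1..1} (dv \<iota>)"
    and "x \<in> {-1..1} \<Longrightarrow> dv \<iota> x \<noteq> 0"
proof -
  have der: "\<forall>x\<in>{-1..1}. (v \<iota> has_real_derivative dv \<iota> x) (at x within {-1..1}) \<and>
      (dv \<iota> has_real_derivative ddv \<iota> x) (at x within {-1..1})"
    using in_UNP_branches[OF assms(1)] assms(2) by blast
  then show "x \<in> {-1..1} \<Longrightarrow> (v \<iota> has_real_derivative dv \<iota> x) (at x within {-1..1})"
    by blast
  show "continuous_on {-1..1} (dv \<iota>)"
    unfolding continuous_on_eq_continuous_within using der DERIV_continuous by blast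
  have "\<exists>C. \<forall>\<iota>\<in>I. \<forall>x\<in>{-1..1}. dv \<iota> x \<noteq> 0 \<and> \<bar>ddv \<iota> x / dv \<iota> x\<bar> \<le> C"
    using assms(1) unfolding in_UNP_def by (elim conjE) assumption
  then show "x \<in> {-1..1} \<Longrightarrow> dv \<iota> x \<noteq> 0"
    using assms(2) by blast
qed

lemma branch_orientation:
  assumes "in_UNP f I Os v dv ddv" "\<iota> \<in> I"
  shows "sgn (dv \<iota> 0) \<in> {-1, 1}"
    and "\<And>x y. -1 \<le> x \<Longrightarrow> x \<le> y \<Longrightarrow> y \<le> 1 \<Longrightarrow> sgn (dv \<iota> 0) * v \<iota> x \<le> sgn (dv \<iota> 0) * v \<iota> y"
proof -
  note der = in_UNP_derivD(1)[OF assms] and cont = in_UNP_derivD(2)[OF assms]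
    and nz = in_UNP_derivD(3)[OF assms]
  show "sgn (dv \<iota> 0) \<in> {-1, 1}" using nz[of 0] by (simp add: sgn_real_def)
  have "sgn (dv \<iota> x) = sgn (dv \<iota> 0)" if "x \<in> {-1..1}" for x
    using continuous_nonvanishing_sgn_eq[OF _ cont, of x 0] that nz by simp
  then have nonneg: "0 \<le> sgn (dv \<iota> 0) * dv \<iota> x" if "x \<in> {-1..1}" for x
    using that by (metis abs_ge_zero abs_sgn mult.commute)
  have der_scaled: "((\<lambda>t. sgn (dv \<iota> 0) * v \<iota> t) has_real_derivative sgn (dv \<iota> 0) * dv \<iota> x)
      (at x within {-1..1})" if "x \<in> {-1..1}" for x
    using DERIV_cmult[OF der[OF that]] .
  show "sgn (dv \<iota> 0) * v \<iota> x \<le> sgn (dv \<iota> 0) * v \<iota> y"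
    if "-1 \<le> x" "x \<le> y" "y \<le> 1" for x y
    by (rule has_real_derivative_nonneg_imp_mono[of "-1" 1 _ "\<lambda>t. sgn (dv \<iota> 0) * dv \<iota> t",
      OF _ nonneg that]) (use der_scaled in auto)
qed

lemma infdist_le_dist_closure:
  assumes "p \<in> closure S"
  shows "infdist x S \<le> dist x p"
proof -
  have "infdist x S = infdist x (closure S)"
    by (simp add: infdist_eq_setdist)
  also have "\<dots> \<le> dist x p"
    using assms by (rule infdist_le)
  finally show ?thesis .
qed

lemma ilen_greaterThanLessThan: "a < b \<Longrightarrow> ilen {a<..<b} = b - a"
  by (simp add: ilen_def)

lemma branch_lower_bound:
  assumes U: "in_UNP f I Os v dv ddv" and \<iota>: "\<iota> \<in> I"
    and \<sigma>: "\<sigma> \<in> {-1, 1}" and not_endpoint: "v \<iota> \<sigma> \<notin> {-1, 1}"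
  shows "0 < spacing_const I Os"
    and "x \<in> {-1..1} \<Longrightarrow> ilen (Os \<iota>) / spacing_const I Os \<le> 1 - v \<iota> x / (\<sigma> * sgn (dv \<iota> 0))"
proof -
  obtain a b where ab: "-1 \<le> a" "a < b" "b \<le> 1" "Os \<iota> = {a<..<b}"
    and image: "v \<iota> ` {-1..1} = {a..b}"
    using in_UNP_intervalE[OF U \<iota>] by metis
  define \<tau> where "\<tau> = \<sigma> * sgn (dv \<iota> 0)"
  have \<tau>: "\<tau> \<in> {-1, 1}"
    using branch_orientation(1)[OF U \<iota>] \<sigma> by (auto simp: \<tau>_def)
  have \<tau>_max: "\<tau> * v \<iota> x \<le> \<tau> * v \<iota> \<sigma>" if "x \<in> {-1..1}" for x
    using branch_orientation(2)[OF U \<iota>, of x 1] branch_orientation(2)[OF U \<iota>, of "-1" x] \<sigma> that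
    by (auto simp: \<tau>_def)
  have p: "v \<iota> \<sigma> \<in> {a..b}"
    using image \<sigma> by auto
  with ab \<tau> not_endpoint have \<tau>p: "\<tau> * v \<iota> \<sigma> < 1"
    by auto
  have closure: "closure (Os \<iota>) = {a..b}"
    using ab by simp
  have \<tau>_outside: "\<tau> \<notin> closure (Os \<iota>)"
  proof
    assume "\<tau> \<in> closure (Os \<iota>)"
    then have "\<tau> \<in> v \<iota> ` {-1..1}"
      using closure image by simp
    then obtain y where "y \<in> {-1..1}" "\<tau> = v \<iota> y"
      by blast
    then show False
      using \<tau>_max[of y] \<tau>p \<tau> by auto
  qed
  have "infdist \<tau> (Os \<iota>) \<le> dist \<tau> (v \<iota> \<sigma>)"
    using p closure by (intro infdist_le_dist_closure) auto
  also have "\<dots> = 1 - \<tau> * v \<iota> \<sigma>"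
    using \<tau> \<tau>p by (auto simp: dist_real_def)
  finally have gap: "infdist \<tau> (Os \<iota>) \<le> 1 - \<tau> * v \<iota> \<sigma>" .
  have "infdist \<tau> (Os \<iota>) \<noteq> 0"
    using \<tau>_outside in_closure_iff_infdist_zero[of "Os \<iota>" \<tau>] ab by auto
  then have dist_pos: "0 < infdist \<tau> (Os \<iota>)"
    using infdist_nonneg[of \<tau> "Os \<iota>"] by linarith
  have len_pos: "0 < ilen (Os \<iota>)"
    using ab by (simp add: ilen_greaterThanLessThan)
  have "ilen (Os \<iota>) / infdist \<tau> (Os \<iota>) \<in> spacing_ratios I Os"
    unfolding spacing_ratios_def using \<iota> \<tau> \<tau>_outside \<sigma> by (auto simp: \<tau>_def)
  moreover have "bdd_above (spacing_ratios I Os)"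
    using U unfolding in_UNP_def by (elim conjE)
  ultimately have ratio: "ilen (Os \<iota>) / infdist \<tau> (Os \<iota>) \<le> spacing_const I Os"
    unfolding spacing_const_def by (rule cSup_upper)
  moreover have "0 < ilen (Os \<iota>) / infdist \<tau> (Os \<iota>)"
    using len_pos dist_pos by simp
  ultimately show \<Xi>_pos: "0 < spacing_const I Os"
    by linarith
  assume "x \<in> {-1..1}"
  have "ilen (Os \<iota>) / spacing_const I Os \<le> infdist \<tau> (Os \<iota>)"
    using ratio \<Xi>_pos dist_pos by (simp add: field_simps)
  also have "\<dots> \<le> 1 - \<tau> * v \<iota> x"
    using gap \<tau>_max[OF \<open>x \<in> {-1..1}\<close>] by linarith
  also have "\<dots> = 1 - v \<iota> x / (\<sigma> * sgn (dv \<iota> 0))"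
    using \<tau> by (auto simp: \<tau>_def)
  finally show "ilen (Os \<iota>) / spacing_const I Os \<le> 1 - v \<iota> x / (\<sigma> * sgn (dv \<iota> 0))" .
qed

lemma branch_endpoint_span:
  assumes U: "in_UNP f I Os v dv ddv" and \<iota>: "\<iota> \<in> I"
  shows "\<bar>v \<iota> 1 - v \<iota> (-1)\<bar> = ilen (Os \<iota>)"
proof -
  obtain a b where ab: "a < b" "Os \<iota> = {a<..<b}" and image: "v \<iota> ` {-1..1} = {a..b}"
    using in_UNP_intervalE[OF U \<iota>] by metis
  have "a \<in> v \<iota> ` {-1..1}" "b \<in> v \<iota> ` {-1..1}"
    using image ab by auto
  then obtain ya yb where y: "ya \<in> {-1..1}" "v \<iota> ya = a" "yb \<in> {-1..1}" "v \<iota> yb = b"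
    by blast
  have ends: "v \<iota> 1 \<in> {a..b}" "v \<iota> (-1) \<in> {a..b}"
    using image by auto
  define s where "s = sgn (dv \<iota> 0)"
  have mono: "s * v \<iota> x \<le> s * v \<iota> y" if "x \<in> {-1..1}" "y \<in> {-1..1}" "x \<le> y" for x y
    using branch_orientation(2)[OF U \<iota>, of x y] that by (simp add: s_def)
  have "s * v \<iota> (-1) \<le> s * a" "s * v \<iota> (-1) \<le> s * b" "s * a \<le> s * v \<iota> 1" "s * b \<le> s * v \<iota> 1"
    using mono[of "-1" ya] mono[of "-1" yb] mono[of ya 1] mono[of yb 1] y by auto
  moreover have "s \<in> {-1, 1}"
    using branch_orientation(1)[OF U \<iota>] by (simp add: s_def)
  ultimately have "\<bar>v \<iota> 1 - v \<iota> (-1)\<bar> = b - a"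
    using ends by auto
  then show ?thesis
    using ab by (simp add: ilen_greaterThanLessThan)
qed

(* Interior of bernstein_region: the logarithm of V' is taken on an open convex set. *)
definition open_bernstein_region :: "real \<Rightarrow> complex set" where
  "open_bernstein_region \<zeta> = {z. (Re z)\<^sup>2 / (cosh \<zeta>)\<^sup>2 + (Im z)\<^sup>2 / (sinh \<zeta>)\<^sup>2 < 1}"

lemma open_bernstein_region_eq_vimage_ball:
  "open_bernstein_region \<zeta> = (\<lambda>z. Complex (Re z / cosh \<zeta>) (Im z / sinh \<zeta>)) -` ball 0 1"
  by (auto simp: open_bernstein_region_def complex_norm power_divide)

lemma open_open_bernstein_region: "open (open_bernstein_region \<zeta>)"
  unfolding open_bernstein_region_def divide_inverse
  by (intro open_Collect_less continuous_intros)

lemma convex_open_bernstein_region: "convex (open_bernstein_region \<zeta>)"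
  unfolding open_bernstein_region_eq_vimage_ball
  by (intro convex_linear_vimage convex_ball) (auto intro!: linearI simp: complex_eq_iff add_divide_distrib)

lemma bernstein_region_subset_open:
  assumes "0 < \<zeta>" "\<zeta> < \<delta>"
  shows "bernstein_region \<zeta> \<subseteq> open_bernstein_region \<delta>"
proof
  fix z assume z: "z \<in> bernstein_region \<zeta>"
  define c where "c = (cosh \<zeta> / cosh \<delta>)\<^sup>2"
  define s where "s = (sinh \<zeta> / sinh \<delta>)\<^sup>2"
  have "cosh \<zeta> < cosh \<delta>" "sinh \<zeta> < sinh \<delta>"
    using assms by (simp_all add: cosh_real_strict_mono)
  then have "c < 1" "s < 1"
    using assms by (simp_all add: c_def s_def power_divide power_strict_mono)
  have "(Re z)\<^sup>2 / (cosh \<delta>)\<^sup>2 + (Im z)\<^sup>2 / (sinh \<delta>)\<^sup>2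
      = c * ((Re z)\<^sup>2 / (cosh \<zeta>)\<^sup>2) + s * ((Im z)\<^sup>2 / (sinh \<zeta>)\<^sup>2)"
    using assms by (simp add: c_def s_def power_divide)
  also have "\<dots> \<le> max c s * ((Re z)\<^sup>2 / (cosh \<zeta>)\<^sup>2 + (Im z)\<^sup>2 / (sinh \<zeta>)\<^sup>2)"
    unfolding distrib_left by (intro add_mono mult_right_mono) auto
  also have "\<dots> \<le> max c s"
    using z by (intro mult_left_le) (auto simp: bernstein_region_def c_def le_max_iff_disj)
  also have "\<dots> < 1"
    using \<open>c < 1\<close> \<open>s < 1\<close> by simp
  finally show "z \<in> open_bernstein_region \<delta>"
    by (simp add: open_bernstein_region_def)
qed

lemma of_real_in_open_bernstein_region:
  assumes "0 < \<delta>" "x \<in> {-1..1}"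
  shows "complex_of_real x \<in> open_bernstein_region \<delta>"
proof -
  have "1 < cosh \<delta>"
    using assms(1) cosh_real_strict_mono[of 0 \<delta>] by simp
  then have "1 < (cosh \<delta>)\<^sup>2"
    by simp
  moreover have "x\<^sup>2 \<le> 1"
    using assms(2) by (simp add: abs_square_le_1 abs_le_iff)
  ultimately show ?thesis
    by (simp add: open_bernstein_region_def)
qed

lemma norm_le_cosh_if_in_open_bernstein_region:
  assumes "0 < \<delta>" "z \<in> open_bernstein_region \<delta>"
  shows "cmod z \<le> cosh \<delta>"
proof -
  have "(sinh \<delta>)\<^sup>2 \<le> (cosh \<delta>)\<^sup>2"
    using assms(1) sinh_le_cosh_real[of \<delta>] by (simp add: power_mono)
  then have "(Im z)\<^sup>2 / (cosh \<delta>)\<^sup>2 \<le> (Im z)\<^sup>2 / (sinh \<delta>)\<^sup>2"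
    using assms(1) by (intro divide_left_mono) auto
  then have "((Re z)\<^sup>2 + (Im z)\<^sup>2) / (cosh \<delta>)\<^sup>2 < 1"
    using assms(2) by (simp add: open_bernstein_region_def add_divide_distrib)
  then have "(cmod z)\<^sup>2 \<le> (cosh \<delta>)\<^sup>2"
    by (simp add: cmod_power2)
  then show ?thesis
    by (simp add: power2_le_iff_abs_le)
qed

lemma bernstein_region_near_interval:
  assumes "0 < \<zeta>" "z \<in> bernstein_region \<zeta>"
  obtains x where "x \<in> {-1..1}" "cmod (z - complex_of_real x) \<le> exp \<zeta> - 1"
proof -
  have "(Re z)\<^sup>2 / (cosh \<zeta>)\<^sup>2 \<le> 1" "(Im z)\<^sup>2 / (sinh \<zeta>)\<^sup>2 \<le> 1"
    using assms(2) unfolding bernstein_region_def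
    by (smt (verit) divide_nonneg_nonneg mem_Collect_eq zero_le_power2)+
  then have "\<bar>Re z\<bar> \<le> cosh \<zeta>" "\<bar>Im z\<bar> \<le> sinh \<zeta>"
    using assms(1) by (simp_all add: power2_le_iff_abs_le[symmetric])
  define x where "x = max (-1) (min 1 (Re z))"
  have "\<bar>Re z - x\<bar> \<le> cosh \<zeta> - 1"
    using \<open>\<bar>Re z\<bar> \<le> cosh \<zeta>\<close> cosh_real_ge_1[of \<zeta>] by (auto simp: x_def)
  then have "cmod (z - complex_of_real x) \<le> (cosh \<zeta> - 1) + sinh \<zeta>"
    using cmod_le[of "z - complex_of_real x"] \<open>\<bar>Im z\<bar> \<le> sinh \<zeta>\<close> by simp
  also have "\<dots> = exp \<zeta> - 1"
    by (simp add: cosh_plus_sinh[symmetric])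
  finally show thesis
    using that[of x] by (simp add: x_def)
qed

lemma holomorphic_log_derivative_distortion:
  assumes S: "convex S" "open S" and hol: "\<phi> holomorphic_on S"
    and nonzero: "\<And>w. w \<in> S \<Longrightarrow> \<phi> w \<noteq> 0"
    and bound: "\<And>w. w \<in> S \<Longrightarrow> cmod (deriv \<phi> w / \<phi> w) \<le> L"
    and "w \<in> S" "y \<in> S"
  shows "cmod (\<phi> w) \<le> exp (L * cmod (w - y)) * cmod (\<phi> y)"
proof -
  obtain g where g: "g holomorphic_on S" and exp_g: "\<And>x. x \<in> S \<Longrightarrow> exp (g x) = \<phi> x"
    using holomorphic_logarithm_exists[OF S hol nonzero \<open>y \<in> S\<close>] by metis
  have "(g has_field_derivative deriv \<phi> x / \<phi> x) (at x within S)" if "x \<in> S" for x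
  proof -
    have g': "(g has_field_derivative deriv g x) (at x)"
      using holomorphic_derivI[OF g S(2) that] .
    have "((\<lambda>x. exp (g x)) has_field_derivative exp (g x) * deriv g x) (at x)"
      using DERIV_chain2[OF DERIV_exp g'] by simp
    then have "(\<phi> has_field_derivative \<phi> x * deriv g x) (at x)"
      using exp_g that by (auto intro: has_field_derivative_transform_within_open[OF _ S(2) that])
    then have "deriv \<phi> x = \<phi> x * deriv g x"
      by (rule DERIV_imp_deriv)
    then have "deriv g x = deriv \<phi> x / \<phi> x"
      using nonzero[OF that] by simp
    with g' show ?thesis
      by (simp add: has_field_derivative_at_within)
  qed
  then have "cmod (g w - g y) \<le> L * cmod (w - y)"
    using bound \<open>w \<in> S\<close> \<open>y \<in> S\<close> by (rule field_differentiable_bound[OF S(1)])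
  then have "Re (g w) \<le> Re (g y) + L * cmod (w - y)"
    using complex_Re_le_cmod[of "g w - g y"] by simp
  then have "exp (Re (g w)) \<le> exp (L * cmod (w - y)) * exp (Re (g y))"
    by (simp add: exp_add[symmetric] add.commute)
  then show ?thesis
    using exp_g \<open>w \<in> S\<close> \<open>y \<in> S\<close> by (metis norm_exp_eq_Re)
qed

lemma deriv_of_real_extension:
  assumes hol: "V holomorphic_on S" and "open S" "a < b" "x \<in> {a..b}"
    and "complex_of_real x \<in> S"
    and extends: "\<And>t. t \<in> {a..b} \<Longrightarrow> V (complex_of_real t) = complex_of_real (v t)"
    and der: "(v has_real_derivative v') (at x within {a..b})"
  shows "deriv V (complex_of_real x) = complex_of_real v'"
proof -
  have "((\<lambda>t. V (of_real t)) has_vector_derivative deriv V (of_real x)) (at x within {a..b})"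
    using assms by (intro has_vector_derivative_real_field holomorphic_derivI[OF hol])
  moreover have "((\<lambda>t. V (of_real t)) has_vector_derivative of_real v') (at x within {a..b})"
    by (rule has_vector_derivative_transform[OF \<open>x \<in> {a..b}\<close> _ has_vector_derivative_of_real[OF der]])
      (use extends in auto)
  ultimately show ?thesis
    using vector_derivative_unique_within_closed_interval[of a b x] assms(3,4) by auto
qed

context
  fixes \<delta> L :: real and W :: "complex \<Rightarrow> complex" and w w' :: "real \<Rightarrow> real"
  assumes \<delta>: "0 < \<delta>" and L: "0 \<le> L"
    and hol: "W holomorphic_on open_bernstein_region \<delta>"
    and extends: "\<And>x. x \<in> {-1..1} \<Longrightarrow> W (complex_of_real x) = complex_of_real (w x)"
    and der: "\<And>x. x \<in> {-1..1} \<Longrightarrow> (w has_real_derivative w' x) (at x within {-1..1})"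
    and nonzero: "\<And>z. z \<in> open_bernstein_region \<delta> \<Longrightarrow> deriv W z \<noteq> 0"
    and distortion: "\<And>z. z \<in> open_bernstein_region \<delta> \<Longrightarrow> cmod (deriv (deriv W) z / deriv W z) \<le> L"
begin

lemma holomorphic_extension_deriv_bound:
  assumes z: "z \<in> open_bernstein_region \<delta>"
  shows "cmod (deriv W z) \<le> exp (2 * L * cosh \<delta>) * (\<bar>w 1 - w (-1)\<bar> / 2)"
proof -
  have "\<exists>\<xi>\<in>{-1..1}. w 1 - w (-1) = w' \<xi> * (1 - (-1))"
  proof (rule mvt_very_simple)
    fix x :: real assume "-1 \<le> x" "x \<le> 1"
    then show "(w has_derivative (*) (w' x)) (at x within {-1..1})"
      using der by (simp add: has_field_derivative_def)
  qed simp
  then obtain \<xi> where \<xi>: "\<xi> \<in> {-1..1}" "\<bar>w' \<xi>\<bar> = \<bar>w 1 - w (-1)\<bar> / 2"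
    by force
  have \<xi>_in: "complex_of_real \<xi> \<in> open_bernstein_region \<delta>"
    using of_real_in_open_bernstein_region[OF \<delta> \<xi>(1)] .
  have "deriv W (complex_of_real \<xi>) = complex_of_real (w' \<xi>)"
    using \<xi> \<xi>_in by (intro deriv_of_real_extension[OF hol open_open_bernstein_region _ _ _ extends der]) auto
  then have at_\<xi>: "cmod (deriv W (complex_of_real \<xi>)) = \<bar>w 1 - w (-1)\<bar> / 2"
    using \<xi>(2) by simp
  have "cmod (z - complex_of_real \<xi>) \<le> 2 * cosh \<delta>"
    using norm_le_cosh_if_in_open_bernstein_region[OF \<delta> z]
      norm_le_cosh_if_in_open_bernstein_region[OF \<delta> \<xi>_in]
      norm_triangle_ineq4[of z "complex_of_real \<xi>"] by linarith
  then have "exp (L * cmod (z - complex_of_real \<xi>)) \<le> exp (2 * L * cosh \<delta>)"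
    using L by (simp add: mult_left_mono mult.assoc mult.left_commute)
  have "cmod (deriv W z) \<le> exp (L * cmod (z - complex_of_real \<xi>)) * cmod (deriv W (complex_of_real \<xi>))"
    using holomorphic_deriv[OF hol open_open_bernstein_region] nonzero distortion z \<xi>_in
    by (rule holomorphic_log_derivative_distortion[OF convex_open_bernstein_region open_open_bernstein_region])
  also have "\<dots> \<le> exp (2 * L * cosh \<delta>) * (\<bar>w 1 - w (-1)\<bar> / 2)"
    unfolding at_\<xi> using \<open>exp (L * _) \<le> _\<close> by (rule mult_right_mono) simp
  finally show ?thesis .
qed

lemma holomorphic_extension_near_interval:
  assumes "0 < \<zeta>" "\<zeta> < \<delta>" "z \<in> bernstein_region \<zeta>"
  obtains x where "x \<in> {-1..1}"
    "cmod (W z - complex_of_real (w x)) \<le> exp (2 * L * cosh \<delta>) * (\<bar>w 1 - w (-1)\<bar> / 2) * (exp \<zeta> - 1)"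
proof -
  obtain x where x: "x \<in> {-1..1}" and near: "cmod (z - complex_of_real x) \<le> exp \<zeta> - 1"
    using bernstein_region_near_interval[OF assms(1,3)] .
  have z: "z \<in> open_bernstein_region \<delta>"
    using bernstein_region_subset_open[OF assms(1,2)] assms(3) by blast
  have "cmod (W z - W (complex_of_real x))
      \<le> exp (2 * L * cosh \<delta>) * (\<bar>w 1 - w (-1)\<bar> / 2) * cmod (z - complex_of_real x)"
  proof (rule field_differentiable_bound[OF convex_open_bernstein_region])
    fix u assume u: "u \<in> open_bernstein_region \<delta>"
    show "(W has_field_derivative deriv W u) (at u within open_bernstein_region \<delta>)"
      using holomorphic_derivI[OF hol open_open_bernstein_region u] by (rule has_field_derivative_at_within)
    show "cmod (deriv W u) \<le> exp (2 * L * cosh \<delta>) * (\<bar>w 1 - w (-1)\<bar> / 2)"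
      using holomorphic_extension_deriv_bound[OF u] .
  qed (rule z of_real_in_open_bernstein_region[OF \<delta> x])+
  also have "\<dots> \<le> exp (2 * L * cosh \<delta>) * (\<bar>w 1 - w (-1)\<bar> / 2) * (exp \<zeta> - 1)"
    using near by (intro mult_left_mono) auto
  finally show thesis
    using that x extends[OF x] by simp
qed

end

lemma AD_E:
  assumes "AD \<delta> I v V"
  obtains L where "0 < \<delta>" "0 \<le> L"
    "\<And>\<iota>. \<iota> \<in> I \<Longrightarrow> V \<iota> holomorphic_on open_bernstein_region \<delta>"
    "\<And>\<iota> x. \<iota> \<in> I \<Longrightarrow> x \<in> {-1..1} \<Longrightarrow> V \<iota> (complex_of_real x) = complex_of_real (v \<iota> x)"
    "\<And>\<iota> z. \<iota> \<in> I \<Longrightarrow> z \<in> open_bernstein_region \<delta> \<Longrightarrow> deriv (V \<iota>) z \<noteq> 0"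
    "\<And>\<iota> z. \<iota> \<in> I \<Longrightarrow> z \<in> open_bernstein_region \<delta> \<Longrightarrow>
      cmod (deriv (deriv (V \<iota>)) z / deriv (V \<iota>) z) \<le> L"
proof -
  have region: "open_bernstein_region \<delta> \<subseteq> bernstein_region \<delta>"
    by (auto simp: open_bernstein_region_def bernstein_region_def)
  obtain C where C: "\<forall>\<iota>\<in>I. \<forall>z\<in>bernstein_region \<delta>.
      deriv (V \<iota>) z \<noteq> 0 \<and> cmod (deriv (deriv (V \<iota>)) z / deriv (V \<iota>) z) \<le> C"
    using assms unfolding AD_def by blast
  show thesis
  proof (rule that[of "max C 0"])
    show "V \<iota> holomorphic_on open_bernstein_region \<delta>" if "\<iota> \<in> I" for \<iota>
      using assms that region unfolding AD_def
      by (meson analytic_imp_holomorphic holomorphic_on_subset)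
  qed (use assms C region in \<open>auto simp: AD_def intro: order.trans[OF _ max.cobounded1]\<close>)
qed

lemma norm_one_minus_divide_unit_ge:
  fixes \<tau> a :: real and w :: complex
  assumes "\<bar>\<tau>\<bar> = 1"
  shows "\<bar>1 - a / \<tau>\<bar> - cmod (w - complex_of_real a) \<le> cmod (1 - w / complex_of_real \<tau>)"
proof -
  have "1 - w / complex_of_real \<tau> = complex_of_real (1 - a / \<tau>) - (w - complex_of_real a) / complex_of_real \<tau>"
    using assms by (auto simp: field_simps)
  then have "cmod (complex_of_real (1 - a / \<tau>)) - cmod ((w - complex_of_real a) / complex_of_real \<tau>)
      \<le> cmod (1 - w / complex_of_real \<tau>)"
    by (simp only: norm_triangle_ineq2)
  moreover have "cmod ((w - complex_of_real a) / complex_of_real \<tau>) = cmod (w - complex_of_real a)"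
    using assms by (simp add: norm_divide)
  ultimately show ?thesis
    by (simp only: norm_of_real)
qed

lemma exists_bernstein_lower_bound:
  assumes U: "in_UNP f I Os v dv ddv" and AD: "AD \<delta> I v V"
  shows "\<exists>\<zeta>. 0 < \<zeta> \<and> \<zeta> \<le> \<delta> \<and> (\<exists>K > 0.
           \<forall>\<iota>\<in>I. \<forall>\<sigma>\<in>{-1, 1::real}. v \<iota> \<sigma> \<notin> {-1, 1} \<longrightarrow>
             (\<forall>z\<in>bernstein_region \<zeta>.
                cmod (1 - V \<iota> z / complex_of_real (\<sigma> * sgn (dv \<iota> 0))) \<ge> K * ilen (Os \<iota>)))"
proof -
  obtain L where \<delta>: "0 < \<delta>" and L: "0 \<le> L"
    and hol: "\<And>\<iota>. \<iota> \<in> I \<Longrightarrow> V \<iota> holomorphic_on open_bernstein_region \<delta>"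
    and extends: "\<And>\<iota> x. \<iota> \<in> I \<Longrightarrow> x \<in> {-1..1} \<Longrightarrow> V \<iota> (complex_of_real x) = complex_of_real (v \<iota> x)"
    and nonzero: "\<And>\<iota> z. \<iota> \<in> I \<Longrightarrow> z \<in> open_bernstein_region \<delta> \<Longrightarrow> deriv (V \<iota>) z \<noteq> 0"
    and distortion: "\<And>\<iota> z. \<iota> \<in> I \<Longrightarrow> z \<in> open_bernstein_region \<delta> \<Longrightarrow>
      cmod (deriv (deriv (V \<iota>)) z / deriv (V \<iota>) z) \<le> L"
    using AD_E[OF AD] by blast
  (* zeta is chosen so that V moves by at most |O|/(2X) on bernstein_region zeta. *)
  define X where "X = max (spacing_const I Os) 1"
  define D where "D = exp (2 * L * cosh \<delta>)"
  define \<zeta> where "\<zeta> = min (\<delta> / 2) (ln (1 + 1 / (D * X)))"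
  define K where "K = 1 / (2 * X)"
  have X: "0 < X" "spacing_const I Os \<le> X" and D: "0 < D"
    by (simp_all add: X_def D_def)
  have "0 < ln (1 + 1 / (D * X))"
    using X D by (intro ln_gt_zero) simp
  then have \<zeta>: "0 < \<zeta>" "\<zeta> < \<delta>"
    using \<delta> by (simp_all add: \<zeta>_def)
  have "exp \<zeta> \<le> exp (ln (1 + 1 / (D * X)))"
    by (simp add: \<zeta>_def del: exp_ln)
  also have "\<dots> = 1 + 1 / (D * X)"
    using X D by (intro exp_ln) (simp add: add_pos_pos)
  finally have thin: "D * (exp \<zeta> - 1) \<le> 1 / X"
    using X D by (simp add: field_simps)
  have bound: "K * ilen (Os \<iota>) \<le> cmod (1 - V \<iota> z / complex_of_real (\<sigma> * sgn (dv \<iota> 0)))"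
    if \<iota>: "\<iota> \<in> I" and \<sigma>: "\<sigma> \<in> {-1, 1}" and not_endpoint: "v \<iota> \<sigma> \<notin> {-1, 1}"
      and z: "z \<in> bernstein_region \<zeta>" for \<iota> \<sigma> z
  proof -
    obtain x where x: "x \<in> {-1..1}"
      and close: "cmod (V \<iota> z - complex_of_real (v \<iota> x)) \<le> D * (ilen (Os \<iota>) / 2) * (exp \<zeta> - 1)"
      using holomorphic_extension_near_interval[OF \<delta> L hol[OF \<iota>] extends[OF \<iota>] in_UNP_derivD(1)[OF U \<iota>]
          nonzero[OF \<iota>] distortion[OF \<iota>] \<zeta> z]
      unfolding branch_endpoint_span[OF U \<iota>] D_def by blast
    have len: "0 \<le> ilen (Os \<iota>)"
      using branch_endpoint_span[OF U \<iota>] by (metis abs_ge_zero)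
    have "D * (ilen (Os \<iota>) / 2) * (exp \<zeta> - 1) \<le> ilen (Os \<iota>) / (2 * X)"
      using mult_left_mono[OF thin len] by (simp add: field_simps)
    with close have perturbation: "cmod (V \<iota> z - complex_of_real (v \<iota> x)) \<le> ilen (Os \<iota>) / (2 * X)"
      by linarith
    have "ilen (Os \<iota>) / X \<le> ilen (Os \<iota>) / spacing_const I Os"
      using branch_lower_bound(1)[OF U \<iota> \<sigma> not_endpoint] X len by (intro divide_left_mono) auto
    also have "\<dots> \<le> 1 - v \<iota> x / (\<sigma> * sgn (dv \<iota> 0))"
      by (rule branch_lower_bound(2)[OF U \<iota> \<sigma> not_endpoint x])
    finally have real_part: "ilen (Os \<iota>) / X \<le> \<bar>1 - v \<iota> x / (\<sigma> * sgn (dv \<iota> 0))\<bar>"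
      by linarith
    have "K * ilen (Os \<iota>) = ilen (Os \<iota>) / X - ilen (Os \<iota>) / (2 * X)"
      by (simp add: K_def field_simps)
    also have "\<dots> \<le> \<bar>1 - v \<iota> x / (\<sigma> * sgn (dv \<iota> 0))\<bar> - cmod (V \<iota> z - complex_of_real (v \<iota> x))"
      using real_part perturbation by linarith
    also have "\<dots> \<le> cmod (1 - V \<iota> z / complex_of_real (\<sigma> * sgn (dv \<iota> 0)))"
      using \<sigma> branch_orientation(1)[OF U \<iota>]
      by (intro norm_one_minus_divide_unit_ge) (auto simp: abs_mult)
    finally show ?thesis .
  qed
  have "0 < K"
    using X by (simp add: K_def)
  then show ?thesis
    using \<zeta> by (intro exI[of _ \<zeta>] conjI exI[of _ K] ballI impI bound) auto
qed

theorem lemma8: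
  fixes f :: "real \<Rightarrow> real" and I :: "'i set" and Os :: "'i \<Rightarrow> real set"
    and v dv ddv :: "'i \<Rightarrow> real \<Rightarrow> real"
  assumes "in_UNP f I Os v dv ddv"
  shows "(\<forall>\<iota>\<in>I. \<forall>\<sigma>\<in>{-1, 1::real}. v \<iota> \<sigma> \<notin> {-1, 1} \<longrightarrow>
            (\<forall>x\<in>{-1..1}.
               1 - v \<iota> x / (\<sigma> * sgn (dv \<iota> 0)) \<ge> ilen (Os \<iota>) / spacing_const I Os))
       \<and> (\<forall>\<delta> (V :: 'i \<Rightarrow> complex \<Rightarrow> complex). AD \<delta> I v V \<longrightarrow>
            (\<exists>\<zeta>. 0 < \<zeta> \<and> \<zeta> \<le> \<delta> \<and> (\<exists>K > 0.
               \<forall>\<iota>\<in>I. \<forall>\<sigma>\<in>{-1, 1::real}. v \<iota> \<sigma> \<notin> {-1, 1} \<longrightarrow>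
                 (\<forall>z\<in>bernstein_region \<zeta>.
                    cmod (1 - V \<iota> z / complex_of_real (\<sigma> * sgn (dv \<iota> 0)))
                      \<ge> K * ilen (Os \<iota>)))))"
  using branch_lower_bound(2)[OF assms] exists_bernstein_lower_bound[OF assms] by blast

end
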